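(* Let $F$ be a unitary $N=(2,2)$ full vertex operator superalgebra, let $p,q\in\mathbb R$, $a,b\in\mathbb R_{\ge0}$, and let $v\in F^{(p,q)}_{a+p/2,\,b+q/2}$ be nonzero. Then $$\frac{1}{a+1}\Big(2a+\frac c3\big((a+2)^2-\tfrac14\big)\Big)\ge p,\qquad \frac{1}{b+1}\Big(2b+\frac{\bar c}3\big((b+2)^2-\tfrac14\big)\Big)\ge q.$$ In particular, for any $a,b\in\mathbb R_{\ge0}$, $\sum_{p,q\in\mathbb R}\dim F^{(p,q)}_{a+p/2,\,b+q/2}<\infty$.
   Context: A unitary $N=(2,2)$ full VOA is a full vertex operator superalgebra $F=\bigoplus_{(h,\bar h)\in\mathbb R^2}F_{h,\bar h}$ (Moriwaki's axioms: real-analytic locality/associativity of $Y(a,\underline z)=\sum_{r,s}a(r,s)z^{-r-1}\bar z^{-s-1}$, vacuum $\mathbf 1$, $F_{0,0}=\mathbb C\mathbf 1$, $F_{h,\bar h}=0$ unless $h-\bar h\in\frac12\mathbb Z$, $\sum_{h+\bar h<K}\dim F_{h,\bar h}<\infty$ for all $K$, bounded below bigrading, conformal vectors $\omega\in F_{2,0},\bar\omega\in F_{0,2}$ giving commuting Virasoro actions $L(n),\bar L(n)$ of central charges $c,\bar c>0$ with $L(0),\bar L(0)$ the bigrading) with holomorphic $\tau^\pm\in F_{3/2,0}$, $J\in F_{1,0}$ and antiholomorphic $\bar\tau^\pm\in F_{0,3/2}$, $\bar J\in F_{0,1}$ whose modes $G^\pm_r,J_n$ ($Y(\tau^\pm,\underline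 z)=\sum_{r\in\frac12+\mathbb Z}G^\pm_rz^{-r-3/2}$, $Y(J,\underline z)=\sum J_nz^{-n-1}$) and $\bar G^\pm_r,\bar J_n$ satisfy two supercommuting copies of the $N=2$ Neveu–Schwarz relations ($[J_m,J_n]=\frac c3m\delta_{m+n,0}$, $[J_m,G^\pm_r]=\pm G^\pm_{m+r}$, $[L_m,G^\pm_r]=(\frac m2-r)G^\pm_{m+r}$, $[L_m,J_n]=-nJ_{m+n}$, $[G^\pm_r,G^\pm_s]_+=0$, $[G^+_r,G^-_s]_+=L_{r+s}+\frac12(r-s)J_{r+s}+\frac c6(r^2-\frac14)\delta_{r+s,0}$; barred with $\bar c$), $J_0,\bar J_0$ semisimple with real eigenvalues, $J_0-\bar J_0$ integral with $\exp(\pi i(J_0-\bar J_0))$ the parity operator; plus an invariant symmetric bilinear form ($(\mathbf 1,\mathbf 1)=1$, $(u,Y(a,\underline z)v)=(Y(e^{L(1)z+\bar L(1)\bar z}(-1)^{(L(0)-\bar L(0))+2(L(0)-\bar L(0))^2}z^{-2L(0)}\bar z^{-2\bar L(0)}a,\underline z^{-1})u,v)$) and an anti-linear involutive automorphism $\phi$ with $\phi(J)=-J,\phi(\tau^\pm)=\tau^\mp,\phi(\bar J)=-\bar J,\phi(\bar\tau^\pm)=-\bar\tau^\mp$ and $(\phi(\cdot),\cdot)$ positive definite. $F^{(p,q)}_{h,\bar h}=\{v\in F_{h,\bar h}:J_0v=pv,\bar J_0v=qv\}$. *)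

theory Defs
  imports "HOL-Analysis.Analysis"
begin

text \<open>
  The underlying space is the
  whole type 'v, a complex vector space with scalar multiplication sc.
  The vertex operator is given by its modes: Y a r s b = a(r,s) b, i.e.
  Y(a,z)b = sum over r,s of a(r,s) b z^(-r-1) zbar^(-s-1) with real exponents.
\<close>

record 'v n22_data =
  sc    :: "complex \<Rightarrow> 'v \<Rightarrow> 'v"
  Y     :: "'v \<Rightarrow> real \<Rightarrow> real \<Rightarrow> 'v \<Rightarrow> 'v"
  vac   :: 'v
  om    :: 'v
  omb   :: 'v
  taup  :: 'v
  taum  :: 'v
  jj    :: 'v
  taubp :: 'v
  taubm :: 'v
  jjb   :: 'v
  cc    :: real
  ccb   :: real
  form  :: "'v \<Rightarrow> 'v \<Rightarrow> complex"
  phi   :: "'v \<Rightarrow> 'v"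

definition Lm :: "('v, 'z) n22_data_scheme \<Rightarrow> int \<Rightarrow> 'v \<Rightarrow> 'v" where
  "Lm F n = Y F (om F) (real_of_int n + 1) (-1)"
definition Lbm :: "('v, 'z) n22_data_scheme \<Rightarrow> int \<Rightarrow> 'v \<Rightarrow> 'v" where
  "Lbm F n = Y F (omb F) (-1) (real_of_int n + 1)"
definition Jm :: "('v, 'z) n22_data_scheme \<Rightarrow> int \<Rightarrow> 'v \<Rightarrow> 'v" where
  "Jm F n = Y F (jj F) (real_of_int n) (-1)"
definition Jbm :: "('v, 'z) n22_data_scheme \<Rightarrow> int \<Rightarrow> 'v \<Rightarrow> 'v" where
  "Jbm F n = Y F (jjb F) (-1) (real_of_int n)"
text \<open>G^{+-}_r for r in 1/2 + Z; Y(tau,z) = sum G_r z^(-r-3/2), so G_r = tau(r+1/2,-1).\<close>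
definition Gp :: "('v, 'z) n22_data_scheme \<Rightarrow> real \<Rightarrow> 'v \<Rightarrow> 'v" where
  "Gp F r = Y F (taup F) (r + 1/2) (-1)"
definition Gm :: "('v, 'z) n22_data_scheme \<Rightarrow> real \<Rightarrow> 'v \<Rightarrow> 'v" where
  "Gm F r = Y F (taum F) (r + 1/2) (-1)"
definition Gbp :: "('v, 'z) n22_data_scheme \<Rightarrow> real \<Rightarrow> 'v \<Rightarrow> 'v" where
  "Gbp F r = Y F (taubp F) (-1) (r + 1/2)"
definition Gbm :: "('v, 'z) n22_data_scheme \<Rightarrow> real \<Rightarrow> 'v \<Rightarrow> 'v" where
  "Gbm F r = Y F (taubm F) (-1) (r + 1/2)"

definition hi :: "int \<Rightarrow> real" where "hi k = real_of_int k + 1/2"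

definition Fhom :: "('v::ab_group_add, 'z) n22_data_scheme \<Rightarrow> real \<Rightarrow> real \<Rightarrow> 'v set" where
  "Fhom F h hb = {v. Lm F 0 v = sc F (complex_of_real h) v \<and> Lbm F 0 v = sc F (complex_of_real hb) v}"

definition Fchg :: "('v::ab_group_add, 'z) n22_data_scheme \<Rightarrow> real \<Rightarrow> real \<Rightarrow> real \<Rightarrow> real \<Rightarrow> 'v set" where
  "Fchg F p q h hb = {v \<in> Fhom F h hb. Jm F 0 v = sc F (complex_of_real p) v
                                      \<and> Jbm F 0 v = sc F (complex_of_real q) v}"

definition fin_dim :: "(complex \<Rightarrow> 'v::ab_group_add \<Rightarrow> 'v) \<Rightarrow> 'v set \<Rightarrow> bool" where
  "fin_dim s S \<longleftrightarrow> (\<exists>B. finite B \<and> S \<subseteq> module.span s B)"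

definition commute_ops :: "('v \<Rightarrow> 'v) \<Rightarrow> ('v \<Rightarrow> 'v) \<Rightarrow> bool" where
  "commute_ops f g \<longleftrightarrow> (\<forall>x. f (g x) = g (f x))"
definition anticommute_ops :: "('v::ab_group_add \<Rightarrow> 'v) \<Rightarrow> ('v \<Rightarrow> 'v) \<Rightarrow> bool" where
  "anticommute_ops f g \<longleftrightarrow> (\<forall>x. f (g x) + g (f x) = 0)"

definition full_vosa_axioms :: "('v::ab_group_add, 'z) n22_data_scheme \<Rightarrow> bool" where
  "full_vosa_axioms F \<longleftrightarrow>
     vector_space (sc F)
   \<and> (\<forall>a r s. Vector_Spaces.linear (sc F) (sc F) (Y F a r s))
   \<and> (\<forall>b r s. Vector_Spaces.linear (sc F) (sc F) (\<lambda>a. Y F a r s b))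
   \<and> UNIV = module.span (sc F) (\<Union>h hb. Fhom F h hb)
   \<and> vac F \<noteq> 0
   \<and> Fhom F 0 0 = module.span (sc F) {vac F}
   \<and> (\<forall>h hb. Fhom F h hb \<noteq> {0} \<longrightarrow> 2 * (h - hb) \<in> \<int>)
   \<and> (\<forall>K. finite {(h, hb). h + hb < K \<and> Fhom F h hb \<noteq> {0}})
   \<and> (\<forall>h hb. fin_dim (sc F) (Fhom F h hb))
   \<and> (\<exists>m. \<forall>h hb. Fhom F h hb \<noteq> {0} \<longrightarrow> m \<le> h \<and> m \<le> hb)
   \<and> (\<forall>r s b. Y F (vac F) r s b = (if r = -1 \<and> s = -1 then b else 0))
   \<and> (\<forall>a. Y F a (-1) (-1) (vac F) = a)
   \<and> (\<forall>a r s. \<not> (r \<in> \<int> \<and> s \<in> \<int> \<and> r \<le> -1 \<and> s \<le> -1) \<longrightarrow> Y F a r s (vac F) = 0)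
   \<and> (\<forall>a b h hb h' hb' r s. a \<in> Fhom F h hb \<longrightarrow> b \<in> Fhom F h' hb' \<longrightarrow>
          Y F a r s b \<in> Fhom F (h + h' - r - 1) (hb + hb' - s - 1))
   \<and> (\<forall>a r s b. Y F (Lm F (-1) a) r s b = sc F (complex_of_real (- r)) (Y F a (r - 1) s b))
   \<and> (\<forall>a r s b. Y F (Lbm F (-1) a) r s b = sc F (complex_of_real (- s)) (Y F a r (s - 1) b))"

definition n22_algebra_axioms :: "('v::ab_group_add, 'z) n22_data_scheme \<Rightarrow> bool" where
  "n22_algebra_axioms F \<longleftrightarrow>
     0 < cc F \<and> 0 < ccb F
   \<and> om F \<in> Fhom F 2 0 \<and> omb F \<in> Fhom F 0 2
   \<and> taup F \<in> Fhom F (3/2) 0 \<and> taum F \<in> Fhom F (3/2) 0 \<and> jj F \<in> Fhom F 1 0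
   \<and> taubp F \<in> Fhom F 0 (3/2) \<and> taubm F \<in> Fhom F 0 (3/2) \<and> jjb F \<in> Fhom F 0 1
   \<and> (\<forall>a \<in> {om F, taup F, taum F, jj F}. \<forall>r s b. s \<noteq> -1 \<longrightarrow> Y F a r s b = 0)
   \<and> (\<forall>a \<in> {omb F, taubp F, taubm F, jjb F}. \<forall>r s b. r \<noteq> -1 \<longrightarrow> Y F a r s b = 0)
   \<comment> \<open>Virasoro relations\<close>
   \<and> (\<forall>m n x. Lm F m (Lm F n x) - Lm F n (Lm F m x)
        = sc F (of_int (m - n)) (Lm F (m + n) x)
          + (if m + n = 0 then sc F (complex_of_real (cc F / 12 * (real_of_int m ^ 3 - real_of_int m))) x else 0))
   \<and> (\<forall>m n x. Lbm F m (Lbm F n x) - Lbm F n (Lbm F m x)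
        = sc F (of_int (m - n)) (Lbm F (m + n) x)
          + (if m + n = 0 then sc F (complex_of_real (ccb F / 12 * (real_of_int m ^ 3 - real_of_int m))) x else 0))
   \<comment> \<open>holomorphic N=2 NS relations\<close>
   \<and> (\<forall>m n x. Jm F m (Jm F n x) - Jm F n (Jm F m x)
        = (if m + n = 0 then sc F (complex_of_real (cc F / 3 * real_of_int m)) x else 0))
   \<and> (\<forall>m k x. Jm F m (Gp F (hi k) x) - Gp F (hi k) (Jm F m x) = Gp F (real_of_int m + hi k) x)
   \<and> (\<forall>m k x. Jm F m (Gm F (hi k) x) - Gm F (hi k) (Jm F m x) = - Gm F (real_of_int m + hi k) x)
   \<and> (\<forall>m k x. Lm F m (Gp F (hi k) x) - Gp F (hi k) (Lm F m x)
        = sc F (complex_of_real (real_of_int m / 2 - hi k)) (Gp F (real_of_int m + hi k) x))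
   \<and> (\<forall>m k x. Lm F m (Gm F (hi k) x) - Gm F (hi k) (Lm F m x)
        = sc F (complex_of_real (real_of_int m / 2 - hi k)) (Gm F (real_of_int m + hi k) x))
   \<and> (\<forall>m n x. Lm F m (Jm F n x) - Jm F n (Lm F m x) = sc F (of_int (- n)) (Jm F (m + n) x))
   \<and> (\<forall>k l x. Gp F (hi k) (Gp F (hi l) x) + Gp F (hi l) (Gp F (hi k) x) = 0)
   \<and> (\<forall>k l x. Gm F (hi k) (Gm F (hi l) x) + Gm F (hi l) (Gm F (hi k) x) = 0)
   \<and> (\<forall>k l x. Gp F (hi k) (Gm F (hi l) x) + Gm F (hi l) (Gp F (hi k) x)
        = Lm F (k + l + 1) x + sc F (complex_of_real ((hi k - hi l) / 2)) (Jm F (k + l + 1) x)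
          + (if k + l + 1 = 0 then sc F (complex_of_real (cc F / 6 * (hi k ^ 2 - 1/4))) x else 0))
   \<comment> \<open>antiholomorphic N=2 NS relations\<close>
   \<and> (\<forall>m n x. Jbm F m (Jbm F n x) - Jbm F n (Jbm F m x)
        = (if m + n = 0 then sc F (complex_of_real (ccb F / 3 * real_of_int m)) x else 0))
   \<and> (\<forall>m k x. Jbm F m (Gbp F (hi k) x) - Gbp F (hi k) (Jbm F m x) = Gbp F (real_of_int m + hi k) x)
   \<and> (\<forall>m k x. Jbm F m (Gbm F (hi k) x) - Gbm F (hi k) (Jbm F m x) = - Gbm F (real_of_int m + hi k) x)
   \<and> (\<forall>m k x. Lbm F m (Gbp F (hi k) x) - Gbp F (hi k) (Lbm F m x)
        = sc F (complex_of_real (real_of_int m / 2 - hi k)) (Gbp F (real_of_int m + hi k) x))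
   \<and> (\<forall>m k x. Lbm F m (Gbm F (hi k) x) - Gbm F (hi k) (Lbm F m x)
        = sc F (complex_of_real (real_of_int m / 2 - hi k)) (Gbm F (real_of_int m + hi k) x))
   \<and> (\<forall>m n x. Lbm F m (Jbm F n x) - Jbm F n (Lbm F m x) = sc F (of_int (- n)) (Jbm F (m + n) x))
   \<and> (\<forall>k l x. Gbp F (hi k) (Gbp F (hi l) x) + Gbp F (hi l) (Gbp F (hi k) x) = 0)
   \<and> (\<forall>k l x. Gbm F (hi k) (Gbm F (hi l) x) + Gbm F (hi l) (Gbm F (hi k) x) = 0)
   \<and> (\<forall>k l x. Gbp F (hi k) (Gbm F (hi l) x) + Gbm F (hi l) (Gbp F (hi k) x)
        = Lbm F (k + l + 1) x + sc F (complex_of_real ((hi k - hi l) / 2)) (Jbm F (k + l + 1) x)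
          + (if k + l + 1 = 0 then sc F (complex_of_real (ccb F / 6 * (hi k ^ 2 - 1/4))) x else 0))
   \<comment> \<open>the two copies supercommute\<close>
   \<and> (\<forall>m n. commute_ops (Lm F m) (Lbm F n) \<and> commute_ops (Lm F m) (Jbm F n)
          \<and> commute_ops (Jm F m) (Lbm F n) \<and> commute_ops (Jm F m) (Jbm F n))
   \<and> (\<forall>m k. commute_ops (Lm F m) (Gbp F (hi k)) \<and> commute_ops (Lm F m) (Gbm F (hi k))
          \<and> commute_ops (Jm F m) (Gbp F (hi k)) \<and> commute_ops (Jm F m) (Gbm F (hi k))
          \<and> commute_ops (Lbm F m) (Gp F (hi k)) \<and> commute_ops (Lbm F m) (Gm F (hi k))
          \<and> commute_ops (Jbm F m) (Gp F (hi k)) \<and> commute_ops (Jbm F m) (Gm F (hi k)))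
   \<and> (\<forall>k l. anticommute_ops (Gp F (hi k)) (Gbp F (hi l)) \<and> anticommute_ops (Gp F (hi k)) (Gbm F (hi l))
          \<and> anticommute_ops (Gm F (hi k)) (Gbp F (hi l)) \<and> anticommute_ops (Gm F (hi k)) (Gbm F (hi l)))
   \<comment> \<open>J_0, Jbar_0 semisimple with real eigenvalues, J_0 - Jbar_0 integral\<close>
   \<and> UNIV = module.span (sc F) (\<Union>p q h hb. Fchg F p q h hb)
   \<and> (\<forall>p q h hb. Fchg F p q h hb \<noteq> {0} \<longrightarrow> p - q \<in> \<int>)"

definition invariant_form_axioms :: "('v::ab_group_add, 'z) n22_data_scheme \<Rightarrow> bool" where
  "invariant_form_axioms F \<longleftrightarrow>
     (\<forall>u v. form F u v = form F v u)
   \<and> (\<forall>c u w v. form F (sc F c u + w) v = c * form F u v + form F w v)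
   \<and> form F (vac F) (vac F) = 1
   \<and> (\<forall>a h hb u v r s N. a \<in> Fhom F h hb \<longrightarrow> (Lm F 1 ^^ N) a = 0 \<longrightarrow> (Lbm F 1 ^^ N) a = 0 \<longrightarrow>
        form F u (Y F a r s v)
        = complex_of_real (cos (pi * ((h - hb) + 2 * (h - hb)^2)))
          * (\<Sum>k<N. \<Sum>l<N. form F (Y F ((Lm F 1 ^^ k) ((Lbm F 1 ^^ l) a))
                                         (2 * h - real k - r - 2) (2 * hb - real l - s - 2) u) v
                            / (fact k * fact l)))"

definition unitary_axioms :: "('v::ab_group_add, 'z) n22_data_scheme \<Rightarrow> bool" where
  "unitary_axioms F \<longleftrightarrow>
     (\<forall>x y. phi F (x + y) = phi F x + phi F y)
   \<and> (\<forall>c x. phi F (sc F c x) = sc F (cnj c) (phi F x))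
   \<and> (\<forall>x. phi F (phi F x) = x)
   \<and> (\<forall>a r s b. phi F (Y F a r s b) = Y F (phi F a) r s (phi F b))
   \<and> phi F (vac F) = vac F \<and> phi F (om F) = om F \<and> phi F (omb F) = omb F
   \<and> phi F (jj F) = - jj F \<and> phi F (taup F) = taum F \<and> phi F (taum F) = taup F
   \<and> phi F (jjb F) = - jjb F \<and> phi F (taubp F) = - taubm F \<and> phi F (taubm F) = - taubp F
   \<and> (\<forall>u. u \<noteq> 0 \<longrightarrow> Im (form F (phi F u) u) = 0 \<and> 0 < Re (form F (phi F u) u))"

definition unitary_N22_full_VOA :: "('v::ab_group_add, 'z) n22_data_scheme \<Rightarrow> bool" where
  "unitary_N22_full_VOA F \<longleftrightarrow>
     full_vosa_axioms F \<and> n22_algebra_axioms F \<and> invariant_form_axioms F \<and> unitary_axioms F"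

end

theory Submission
  imports Defs
begin

(* For a half-integer r the N=2 relations give
     G^+_{-r} G^-_r + G^-_r G^+_{-r} = L_0 - r J_0 + c/6 (r^2 - 1/4),
   and invariance of the bilinear form together with phi(tau^+-) = tau^-+ makes G^+_{-r} and
   G^-_r mutually adjoint for the positive definite Hermitian form (phi x, y).  So this operator
   is positive, and on a joint eigenvector h - r p + c/6 (r^2 - 1/4) >= 0.  For h = a + p/2 the
   choice r = ceil a + 3/2 turns this into the bound on p; the antiholomorphic side is the same.
   Bounded charges force h + hb below a fixed level, where only finitely many weight spaces are
   nonzero. *)

definition charge_bound :: "real \<Rightarrow> real \<Rightarrow> real" where
  "charge_bound c a = (2 * a + c / 3 * ((a + 2)^2 - 1/4)) / (a + 1)"

lemma hi_minus: "hi (- j - 1) = - hi j"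
  by (simp add: hi_def)

lemma le_charge_bound:
  fixes a c p :: real
  assumes a: "0 \<le> a" and c: "0 \<le> c"
    and unitarity: "\<And>j. 0 \<le> a + p / 2 - hi j * p + c / 6 * (hi j ^ 2 - 1/4)"
  shows "p \<le> charge_bound c a"
proof -
  define x where "x = real_of_int \<lceil>a\<rceil>"
  have x: "a \<le> x" "x < a + 1"
    unfolding x_def by linarith+
  have "hi (\<lceil>a\<rceil> + 1) = x + 3/2"
    by (simp add: hi_def x_def)
  then have at_x: "p * (x + 1) \<le> a + c / 6 * ((x + 3/2)^2 - 1/4)"
    using unitarity[of "\<lceil>a\<rceil> + 1"] by (simp add: algebra_simps)
  have "2^2 \<le> (a + 2)^2"
    using a by (intro power_mono) auto
  then have bound_nonneg: "0 \<le> 2 * a + c / 3 * ((a + 2)^2 - 1/4)"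
    using a c by simp
  have "p * (a + 1) \<le> 2 * a + c / 3 * ((a + 2)^2 - 1/4)"
  proof (cases "p \<le> 0")
    case True
    then have "p * (a + 1) \<le> 0"
      using a by (simp add: mult_nonpos_nonneg)
    then show ?thesis
      using bound_nonneg by linarith
  next
    case False
    then have "p * (a + 1) \<le> p * (x + 1)"
      using x by simp
    moreover have "(x + 3/2)^2 \<le> (a + 5/2)^2"
      using x a by (intro power_mono) auto
    then have "c / 6 * ((x + 3/2)^2 - 1/4) \<le> c / 6 * ((a + 5/2)^2 - 1/4)"
      using c by (intro mult_left_mono) auto
    moreover have "0 \<le> c * (a^2 + 3 * a + 3/2)"
      using a c by simp
    then have "c / 6 * ((a + 5/2)^2 - 1/4) \<le> a + c / 3 * ((a + 2)^2 - 1/4)"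
      using a by (simp add: power2_eq_square algebra_simps)
    ultimately show ?thesis
      using at_x by linarith
  qed
  then show ?thesis
    using a by (simp add: charge_bound_def pos_le_divide_eq)
qed

locale unitary_N22 =
  fixes F :: "('v::ab_group_add, 'z) n22_data_scheme"
  assumes unitary: "unitary_N22_full_VOA F"
begin

lemma
  shows vector_space: "vector_space (sc F)"
    and Y_linear: "Vector_Spaces.linear (sc F) (sc F) (Y F a r s)"
    and Y_linear_left: "Vector_Spaces.linear (sc F) (sc F) (\<lambda>a. Y F a r s b)"
    and finite_weights_below: "finite {(h, hb). h + hb < K \<and> Fhom F h hb \<noteq> {0}}"
    and fin_dim_Fhom: "fin_dim (sc F) (Fhom F h hb)"
    and Y_vac: "Y F a (-1) (-1) (vac F) = a"
    and Y_vac_vanishes: "\<not> (r \<in> \<int> \<and> s \<in> \<int> \<and> r \<le> -1 \<and> s \<le> -1) \<Longrightarrow> Y F a r s (vac F) = 0"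
  using unitary unfolding unitary_N22_full_VOA_def full_vosa_axioms_def by auto

lemma
  shows cc_pos: "0 < cc F"
    and ccb_pos: "0 < ccb F"
    and taup_weight: "taup F \<in> Fhom F (3/2) 0"
    and taum_weight: "taum F \<in> Fhom F (3/2) 0"
    and taubp_weight: "taubp F \<in> Fhom F 0 (3/2)"
    and taubm_weight: "taubm F \<in> Fhom F 0 (3/2)"
    and L_Gp_commutator: "Lm F m (Gp F (hi k) x) - Gp F (hi k) (Lm F m x)
        = sc F (complex_of_real (real_of_int m / 2 - hi k)) (Gp F (real_of_int m + hi k) x)"
    and L_Gm_commutator: "Lm F m (Gm F (hi k) x) - Gm F (hi k) (Lm F m x)
        = sc F (complex_of_real (real_of_int m / 2 - hi k)) (Gm F (real_of_int m + hi k) x)"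
    and Lb_Gbp_commutator: "Lbm F m (Gbp F (hi k) x) - Gbp F (hi k) (Lbm F m x)
        = sc F (complex_of_real (real_of_int m / 2 - hi k)) (Gbp F (real_of_int m + hi k) x)"
    and Lb_Gbm_commutator: "Lbm F m (Gbm F (hi k) x) - Gbm F (hi k) (Lbm F m x)
        = sc F (complex_of_real (real_of_int m / 2 - hi k)) (Gbm F (real_of_int m + hi k) x)"
    and Gp_Gm_anticommutator: "Gp F (hi k) (Gm F (hi l) x) + Gm F (hi l) (Gp F (hi k) x)
        = Lm F (k + l + 1) x + sc F (complex_of_real ((hi k - hi l) / 2)) (Jm F (k + l + 1) x)
          + (if k + l + 1 = 0 then sc F (complex_of_real (cc F / 6 * (hi k ^ 2 - 1/4))) x else 0)"
    and Gbp_Gbm_anticommutator: "Gbp F (hi k) (Gbm F (hi l) x) + Gbm F (hi l) (Gbp F (hi k) x)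
        = Lbm F (k + l + 1) x + sc F (complex_of_real ((hi k - hi l) / 2)) (Jbm F (k + l + 1) x)
          + (if k + l + 1 = 0 then sc F (complex_of_real (ccb F / 6 * (hi k ^ 2 - 1/4))) x else 0)"
    and L_Gbp_commute: "Lm F m (Gbp F (hi k) x) = Gbp F (hi k) (Lm F m x)"
    and L_Gbm_commute: "Lm F m (Gbm F (hi k) x) = Gbm F (hi k) (Lm F m x)"
    and Lb_Gp_commute: "Lbm F m (Gp F (hi k) x) = Gp F (hi k) (Lbm F m x)"
    and Lb_Gm_commute: "Lbm F m (Gm F (hi k) x) = Gm F (hi k) (Lbm F m x)"
  using unitary unfolding unitary_N22_full_VOA_def n22_algebra_axioms_def commute_ops_def by auto

lemma
  shows form_commute: "form F u v = form F v u"
    and form_scale_add_left: "form F (sc F c u + w) v = c * form F u v + form F w v"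
    and form_invariant: "a \<in> Fhom F h hb \<Longrightarrow> (Lm F 1 ^^ N) a = 0 \<Longrightarrow> (Lbm F 1 ^^ N) a = 0 \<Longrightarrow>
        form F u (Y F a r s v)
        = complex_of_real (cos (pi * ((h - hb) + 2 * (h - hb)^2)))
          * (\<Sum>k<N. \<Sum>l<N. form F (Y F ((Lm F 1 ^^ k) ((Lbm F 1 ^^ l) a))
                                         (2 * h - real k - r - 2) (2 * hb - real l - s - 2) u) v
                            / (fact k * fact l))"
  using unitary unfolding unitary_N22_full_VOA_def invariant_form_axioms_def by auto

lemma
  shows phi_add: "phi F (x + y) = phi F x + phi F y"
    and phi_Y: "phi F (Y F a r s b) = Y F (phi F a) r s (phi F b)"
    and phi_taup: "phi F (taup F) = taum F"
    and phi_taum: "phi F (taum F) = taup F"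
    and phi_taubp: "phi F (taubp F) = - taubm F"
    and phi_taubm: "phi F (taubm F) = - taubp F"
    and form_phi_pos: "u \<noteq> 0 \<Longrightarrow> 0 < Re (form F (phi F u) u)"
  using unitary unfolding unitary_N22_full_VOA_def unitary_axioms_def by auto

sublocale M: module "sc F"
  using vector_space by (simp add: module_iff_vector_space)

lemma Y_zero [simp]: "Y F a r s 0 = 0"
  using Y_linear[unfolded linear_iff_module_hom] by (rule module_hom.zero)

lemma Y_uminus_left: "Y F (- a) r s b = - Y F a r s b"
  using Y_linear_left[unfolded linear_iff_module_hom] by (rule module_hom.neg)

lemma phi_zero [simp]: "phi F 0 = 0"
  using phi_add[of 0 0] by simp

lemma form_add_left: "form F (x + y) v = form F x v + form F y v"
  using form_scale_add_left[of 1 x y v] by simp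

lemma form_zero_left [simp]: "form F 0 v = 0"
  using form_add_left[of 0 0 v] by simp

lemma form_uminus_left: "form F (- x) v = - form F x v"
  using form_add_left[of x "- x" v] by (simp add: eq_neg_iff_add_eq_0 add.commute)

lemma form_add_right: "form F v (x + y) = form F v x + form F v y"
  using form_add_left form_commute by metis

lemma form_scale_right: "form F v (sc F c x) = c * form F v x"
  using form_scale_add_left[of c x 0 v] form_commute by (metis add_0_right form_zero_left)

lemma form_phi_nonneg: "0 \<le> Re (form F (phi F u) u)"
  using form_phi_pos[of u] by (cases "u = 0") auto

definition adjoint :: "('v \<Rightarrow> 'v) \<Rightarrow> ('v \<Rightarrow> 'v) \<Rightarrow> bool" where
  "adjoint A B \<longleftrightarrow> (\<forall>x y. form F (phi F x) (A y) = form F (phi F (B x)) y)"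

lemma anticommutator_eigenvalue_nonneg:
  assumes "adjoint A B" "adjoint B A"
    and eigen: "A (B v) + B (A v) = sc F (complex_of_real e) v" and "v \<noteq> 0"
  shows "0 \<le> e"
proof -
  have "complex_of_real e * form F (phi F v) v = form F (phi F v) (A (B v) + B (A v))"
    by (simp add: eigen form_scale_right)
  also have "\<dots> = form F (phi F (B v)) (B v) + form F (phi F (A v)) (A v)"
    using assms(1,2) by (simp add: adjoint_def form_add_right)
  finally have "Re (complex_of_real e * form F (phi F v) v)
      = Re (form F (phi F (B v)) (B v)) + Re (form F (phi F (A v)) (A v))"
    by simp
  then have "e * Re (form F (phi F v) v) \<ge> 0"
    using form_phi_nonneg[of "A v"] form_phi_nonneg[of "B v"] by simp
  moreover have "Re (form F (phi F v) v) > 0"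
    using form_phi_pos \<open>v \<noteq> 0\<close> by blast
  ultimately show ?thesis
    by (simp add: zero_le_mult_iff)
qed

lemma tau_quasi_primary:
  shows "Lm F 1 (taup F) = 0" "Lm F 1 (taum F) = 0" "Lbm F 1 (taubp F) = 0" "Lbm F 1 (taubm F) = 0"
    and "Lbm F 1 (taup F) = 0" "Lbm F 1 (taum F) = 0" "Lm F 1 (taubp F) = 0" "Lm F 1 (taubm F) = 0"
proof -
  \<comment> \<open>\<open>tau = G_{-3/2} 1\<close> and \<open>[L_1, G_{-3/2}] = 2 G_{-1/2}\<close>; both \<open>G_{-1/2}\<close> and \<open>L_1\<close> kill the vacuum\<close>
  have vac: "Lm F 1 (vac F) = 0" "Lbm F 1 (vac F) = 0"
    by (simp_all add: Lm_def Lbm_def Y_vac_vanishes)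
  note modes = Gp_def Gm_def Gbp_def Gbm_def hi_def Y_vac Y_vac_vanishes vac
  show "Lm F 1 (taup F) = 0" "Lm F 1 (taum F) = 0" "Lbm F 1 (taubp F) = 0" "Lbm F 1 (taubm F) = 0"
    using L_Gp_commutator[of 1 "-2" "vac F"] L_Gm_commutator[of 1 "-2" "vac F"]
      Lb_Gbp_commutator[of 1 "-2" "vac F"] Lb_Gbm_commutator[of 1 "-2" "vac F"]
    by (simp_all add: modes)
  show "Lbm F 1 (taup F) = 0" "Lbm F 1 (taum F) = 0" "Lm F 1 (taubp F) = 0" "Lm F 1 (taubm F) = 0"
    using Lb_Gp_commute[of 1 "-2" "vac F"] Lb_Gm_commute[of 1 "-2" "vac F"]
      L_Gbp_commute[of 1 "-2" "vac F"] L_Gbm_commute[of 1 "-2" "vac F"]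
    by (simp_all add: modes)
qed

lemma form_Y_quasi_primary:
  assumes "a \<in> Fhom F h hb" "Lm F 1 a = 0" "Lbm F 1 a = 0"
  shows "form F u (Y F a r s v) = complex_of_real (cos (pi * ((h - hb) + 2 * (h - hb)^2)))
           * form F (Y F a (2 * h - r - 2) (2 * hb - s - 2) u) v"
  using form_invariant[OF assms(1), of 1] assms(2,3) by simp

lemma
  shows Gp_transpose: "form F u (Gp F r v) = form F (Gp F (- r) u) v"
    and Gm_transpose: "form F u (Gm F r v) = form F (Gm F (- r) u) v"
    and Gbp_transpose: "form F u (Gbp F r v) = - form F (Gbp F (- r) u) v"
    and Gbm_transpose: "form F u (Gbm F r v) = - form F (Gbm F (- r) u) v"
  using form_Y_quasi_primary[OF taup_weight tau_quasi_primary(1,5)]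
    form_Y_quasi_primary[OF taum_weight tau_quasi_primary(2,6)]
    form_Y_quasi_primary[OF taubp_weight tau_quasi_primary(7,3)]
    form_Y_quasi_primary[OF taubm_weight tau_quasi_primary(8,4)]
  by (simp_all add: Gp_def Gm_def Gbp_def Gbm_def power2_eq_square algebra_simps)

lemma
  shows phi_Gp: "phi F (Gp F r x) = Gm F r (phi F x)"
    and phi_Gm: "phi F (Gm F r x) = Gp F r (phi F x)"
    and phi_Gbp: "phi F (Gbp F r x) = - Gbm F r (phi F x)"
    and phi_Gbm: "phi F (Gbm F r x) = - Gbp F r (phi F x)"
  by (simp_all add: Gp_def Gm_def Gbp_def Gbm_def phi_Y phi_taup phi_taum phi_taubp phi_taubm
      Y_uminus_left)

(* For the antiholomorphic fields the sign (-1)^3 from invariance at weight (0, 3/2) cancels the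
   one in phi(taubar^+-) = - taubar^-+. *)
lemma
  shows adjoint_Gp_Gm: "adjoint (Gp F (- r)) (Gm F r)"
    and adjoint_Gm_Gp: "adjoint (Gm F r) (Gp F (- r))"
    and adjoint_Gbp_Gbm: "adjoint (Gbp F (- r)) (Gbm F r)"
    and adjoint_Gbm_Gbp: "adjoint (Gbm F r) (Gbp F (- r))"
  by (simp_all add: adjoint_def Gp_transpose Gm_transpose Gbp_transpose Gbm_transpose
      phi_Gp phi_Gm phi_Gbp phi_Gbm form_uminus_left)

lemma holomorphic_unitarity_bound:
  assumes "v \<in> Fchg F p q h hb" "v \<noteq> 0"
  shows "0 \<le> h - hi j * p + cc F / 6 * (hi j ^ 2 - 1/4)"
proof -
  have "Lm F 0 v = sc F (complex_of_real h) v" "Jm F 0 v = sc F (complex_of_real p) v"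
    using assms(1) by (auto simp: Fchg_def Fhom_def)
  then have "Gp F (- hi j) (Gm F (hi j) v) + Gm F (hi j) (Gp F (- hi j) v)
      = sc F (complex_of_real (h - hi j * p + cc F / 6 * (hi j ^ 2 - 1/4))) v"
    using Gp_Gm_anticommutator[of "- j - 1" j v]
    by (simp add: hi_minus M.scale_scale algebra_simps flip: M.scale_left_distrib)
  then show ?thesis
    by (rule anticommutator_eigenvalue_nonneg[OF adjoint_Gp_Gm adjoint_Gm_Gp _ assms(2)])
qed

lemma antiholomorphic_unitarity_bound:
  assumes "v \<in> Fchg F p q h hb" "v \<noteq> 0"
  shows "0 \<le> hb - hi j * q + ccb F / 6 * (hi j ^ 2 - 1/4)"
proof -
  have "Lbm F 0 v = sc F (complex_of_real hb) v" "Jbm F 0 v = sc F (complex_of_real q) v"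
    using assms(1) by (auto simp: Fchg_def Fhom_def)
  then have "Gbp F (- hi j) (Gbm F (hi j) v) + Gbm F (hi j) (Gbp F (- hi j) v)
      = sc F (complex_of_real (hb - hi j * q + ccb F / 6 * (hi j ^ 2 - 1/4))) v"
    using Gbp_Gbm_anticommutator[of "- j - 1" j v]
    by (simp add: hi_minus M.scale_scale algebra_simps flip: M.scale_left_distrib)
  then show ?thesis
    by (rule anticommutator_eigenvalue_nonneg[OF adjoint_Gbp_Gbm adjoint_Gbm_Gbp _ assms(2)])
qed

lemma zero_mem_Fchg: "0 \<in> Fchg F p q h hb"
  by (simp add: Fchg_def Fhom_def Lm_def Lbm_def Jm_def Jbm_def)

lemma fin_dim_Fchg: "fin_dim (sc F) (Fchg F p q h hb)"
  using fin_dim_Fhom[of h hb] unfolding fin_dim_def Fchg_def by blast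

lemma finite_charges:
  assumes "\<And>p q v. v \<in> Fchg F p q (a + p / 2) (b + q / 2) \<Longrightarrow> v \<noteq> 0 \<Longrightarrow> p \<le> P \<and> q \<le> Q"
  shows "finite {(p, q). Fchg F p q (a + p / 2) (b + q / 2) \<noteq> {0}}"
proof -
  let ?K = "a + b + P / 2 + Q / 2 + 1"
  have "{(p, q). Fchg F p q (a + p / 2) (b + q / 2) \<noteq> {0}}
      \<subseteq> (\<lambda>(h, hb). (2 * (h - a), 2 * (hb - b))) ` {(h, hb). h + hb < ?K \<and> Fhom F h hb \<noteq> {0}}"
  proof clarify
    fix p q
    assume "Fchg F p q (a + p / 2) (b + q / 2) \<noteq> {0}"
    then obtain v where v: "v \<in> Fchg F p q (a + p / 2) (b + q / 2)" "v \<noteq> 0"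
      using zero_mem_Fchg by blast
    then have "p \<le> P" "q \<le> Q" "Fhom F (a + p / 2) (b + q / 2) \<noteq> {0}"
      using assms by (auto simp: Fchg_def)
    then show "(p, q) \<in> (\<lambda>(h, hb). (2 * (h - a), 2 * (hb - b))) ` {(h, hb). h + hb < ?K \<and> Fhom F h hb \<noteq> {0}}"
      by (intro image_eqI[of _ _ "(a + p / 2, b + q / 2)"]) auto
  qed
  then show ?thesis
    using finite_weights_below by (rule finite_subset[OF _ finite_imageI])
qed

end

theorem lemma3p30:
  fixes F :: "('v::ab_group_add, 'z) n22_data_scheme"
  assumes "unitary_N22_full_VOA F"
  shows "(\<forall>p q a b v. 0 \<le> a \<longrightarrow> 0 \<le> b \<longrightarrow> v \<in> Fchg F p q (a + p / 2) (b + q / 2) \<longrightarrow> v \<noteq> 0 \<longrightarrow>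
            (2 * a + cc F / 3 * ((a + 2)^2 - 1/4)) / (a + 1) \<ge> p
          \<and> (2 * b + ccb F / 3 * ((b + 2)^2 - 1/4)) / (b + 1) \<ge> q)
       \<and> (\<forall>a b. 0 \<le> a \<longrightarrow> 0 \<le> b \<longrightarrow>
            finite {(p, q). Fchg F p q (a + p / 2) (b + q / 2) \<noteq> {0}}
          \<and> (\<forall>p q. fin_dim (sc F) (Fchg F p q (a + p / 2) (b + q / 2))))"
proof -
  interpret unitary_N22 F
    by (fact unitary_N22.intro[OF assms])
  have charges_bounded: "p \<le> charge_bound (cc F) a \<and> q \<le> charge_bound (ccb F) b"
    if "0 \<le> a" "0 \<le> b" "v \<in> Fchg F p q (a + p / 2) (b + q / 2)" "v \<noteq> 0" for p q a b v
    using le_charge_bound[OF that(1) less_imp_le[OF cc_pos] holomorphic_unitarity_bound[OF that(3,4)]]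
      le_charge_bound[OF that(2) less_imp_le[OF ccb_pos] antiholomorphic_unitarity_bound[OF that(3,4)]]
    by blast
  have "finite {(p, q). Fchg F p q (a + p / 2) (b + q / 2) \<noteq> {0}}"
    if "0 \<le> a" "0 \<le> b" for a b
    by (rule finite_charges) (rule charges_bounded[OF that])
  then show ?thesis
    using charges_bounded fin_dim_Fchg by (simp add: charge_bound_def)
qed

end
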